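(* There exist an environment (a state space $\mathcal{X}$, a control set $\mathcal{U}$, an initial state distribution, Markovian stochastic stationary dynamics $p(\mathbf{x}_{t+1}\mid \mathbf{x}_t,\mathbf{u}_t)$, a time horizon $T$ and a surrogate loss $l$), a supervisor policy $\pi^*:\mathcal{X}\to\mathcal{U}$, and a policy class $\{\pi_\theta:\theta\in\Theta\}$ such that, with $\theta_{HC}^N$ and $\theta_{RC}^N$ as defined in the context: (i) there is a $\theta^*\in\Theta$ which is the unique minimizer over $\theta\in\Theta$ of $E_{p(\tau\mid\theta)}[J(\theta,\tau)]$; (ii) $\lim_{N\to\infty}\theta_{HC}^N=\theta^*$ with probability $1$; (iii) for every number $m\ge 1$ of initial supervisor demonstrations, $\lim_{N\to\infty}\theta_{RC}^N\neq\theta^*$ with probability at least $c\,e^{-m}$, where $c>0$ is a universal constant. In other words, even with infinite data the robot-centric procedure may converge to a suboptimal policy while the human-centric procedure converges to the unique best policy in the class.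
   Context: Setting: a robot task has state space $\mathcal{X}$, control set $\mathcal{U}$, an initial state density $p(\mathbf{x}_0)$ and Markovian, stochastic, stationary dynamics $p(\mathbf{x}_{t+1}\mid\mathbf{u}_t,\mathbf{x}_t)$. A trajectory of horizon $T$ is $\tau=((\mathbf{x}_0,\mathbf{u}_0),\dots,(\mathbf{x}_T,\mathbf{u}_T))$. A policy is a map $\pi:\mathcal{X}\to\mathcal{U}$; a parametrized policy class is $\{\pi_\theta:\theta\in\Theta\}$, and rolling out $\pi_\theta$ induces the trajectory density $p(\tau\mid\theta)=p(\mathbf{x}_0)\prod_{t}p(\mathbf{x}_{t+1}\mid\mathbf{u}_t,\mathbf{x}_t)p(\mathbf{u}_t\mid\mathbf{x}_t,\theta)$. A supervisor policy $\pi^*$ (not necessarily in the class) labels states with controls. A surrogate loss $l:\mathcal{U}\times\mathcal{U}\to\mathbb{R}_{\ge 0}$ (e.g. the $0/1$ loss) measures disagreement of controls, and the trajectory loss is $J(\theta,\tau)=\sum_{t} l(\pi_\theta(\mathbf{x}_t),\pi^*(\mathbf{x}_t))$, summed over the states $\mathbf{x}_t$ of $\tau$. Human-centric (HC) learning: the supervisor provides $N$ demonstration trajectories $\tau^1,\dots,\tau^N$ sampled i.i.d. by rolling out the supervisor's policy $\pi^*$, and $\theta_{HC}^N\in\arg\min_{\theta\in\Theta}\sum_{i=1}^N J(\theta,\tau^i)$. Robot-centric (RC) learning (DAgger with no mixing): start with a dataset $\mathcal{D}$ of all state–control pairs from $m$ supervisor demonstration trajectories (rolled out under $\pi^*$).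 Iterate: (Step 1) compute $\theta_k\in\arg\min_{\theta\in\Theta}\sum_{(\mathbf{x},\mathbf{u})\in\mathcal{D}_k} l(\pi_\theta(\mathbf{x}),\mathbf{u})$, each pair weighted equally; (Step 2) roll out the robot's current policy $\pi_{\theta_k}$ in the environment, have the supervisor label every visited state $\mathbf{x}_t$ with its control $\pi^*(\mathbf{x}_t)$, and add these labeled pairs to the dataset to form $\mathcal{D}_{k+1}$. $\theta_{RC}^N$ denotes the policy produced by this procedure after $N$ iterations (i.e., trained on the $m$ initial demonstrations plus $N$ robot rollouts with supervisor labels). *)

theory Defs
  imports "HOL-Probability.Probability"
begin

text \<open>States and controls are encoded as natural numbers (countable spaces).
  A state--control pair is (x, u); a trajectory is the list
  [(x_0,u_0), ..., (x_T,u_T)].\<close>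

type_synonym traj = "(nat \<times> nat) list"

text \<open>Rollout of a (deterministic) policy pol from state x for n further steps,
  under the stochastic stationary Markovian dynamics P x u = p(x' | u, x).\<close>
fun roll :: "(nat \<Rightarrow> nat \<Rightarrow> nat pmf) \<Rightarrow> (nat \<Rightarrow> nat) \<Rightarrow> nat \<Rightarrow> nat \<Rightarrow> traj pmf" where
  "roll P pol 0 x = return_pmf [(x, pol x)]"
| "roll P pol (Suc n) x =
     bind_pmf (P x (pol x)) (\<lambda>x'. map_pmf (\<lambda>r. (x, pol x) # r) (roll P pol n x'))"

definition traj_pmf :: "nat pmf \<Rightarrow> (nat \<Rightarrow> nat \<Rightarrow> nat pmf) \<Rightarrow> (nat \<Rightarrow> nat) \<Rightarrow> nat \<Rightarrow> traj pmf" where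
  "traj_pmf p0 P pol T = bind_pmf p0 (roll P pol T)"

definition Jloss :: "(nat \<Rightarrow> nat \<Rightarrow> real) \<Rightarrow> (real \<Rightarrow> nat \<Rightarrow> nat) \<Rightarrow> (nat \<Rightarrow> nat)
    \<Rightarrow> real \<Rightarrow> traj \<Rightarrow> real" where
  "Jloss l polc pistar \<theta> \<tau> = sum_list (map (\<lambda>(x, u). l (polc \<theta> x) (pistar x)) \<tau>)"

definition exp_loss :: "nat pmf \<Rightarrow> (nat \<Rightarrow> nat \<Rightarrow> nat pmf) \<Rightarrow> nat \<Rightarrow> (nat \<Rightarrow> nat \<Rightarrow> real)
    \<Rightarrow> (real \<Rightarrow> nat \<Rightarrow> nat) \<Rightarrow> (nat \<Rightarrow> nat) \<Rightarrow> real \<Rightarrow> ennreal" where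
  "exp_loss p0 P T l polc pistar \<theta> =
     (\<integral>\<^sup>+ \<tau>. ennreal (Jloss l polc pistar \<theta> \<tau>) \<partial>measure_pmf (traj_pmf p0 P (polc \<theta>) T))"

definition is_argmin_on :: "real set \<Rightarrow> (real \<Rightarrow> real) \<Rightarrow> real \<Rightarrow> bool" where
  "is_argmin_on \<Theta> f \<theta> \<longleftrightarrow> \<theta> \<in> \<Theta> \<and> (\<forall>\<theta>'\<in>\<Theta>. f \<theta> \<le> f \<theta>')"

definition hc_obj :: "(nat \<Rightarrow> nat \<Rightarrow> real) \<Rightarrow> (real \<Rightarrow> nat \<Rightarrow> nat) \<Rightarrow> (nat \<Rightarrow> nat)
    \<Rightarrow> traj list \<Rightarrow> real \<Rightarrow> real" where
  "hc_obj l polc pistar \<tau>s \<theta> = sum_list (map (Jloss l polc pistar \<theta>) \<tau>s)"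

definition rc_obj :: "(nat \<Rightarrow> nat \<Rightarrow> real) \<Rightarrow> (real \<Rightarrow> nat \<Rightarrow> nat) \<Rightarrow> (nat \<times> nat) list
    \<Rightarrow> real \<Rightarrow> real" where
  "rc_obj l polc D \<theta> = sum_list (map (\<lambda>(x, u). l (polc \<theta> x) u) D)"

definition label :: "(nat \<Rightarrow> nat) \<Rightarrow> traj \<Rightarrow> (nat \<times> nat) list" where
  "label pistar \<tau> = map (\<lambda>(x, u). (x, pistar x)) \<tau>"

definition rc_data :: "(nat \<Rightarrow> nat) \<Rightarrow> (nat \<Rightarrow> traj) \<Rightarrow> nat \<Rightarrow> (nat \<times> nat) list" where
  "rc_data pistar \<omega> n = concat (map (\<lambda>i. label pistar (\<omega> i)) [0..<n])"

text \<open>Conditional law of the i-th trajectory of the robot-centric procedure given the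
  previous ones: the first m are supervisor demonstrations, afterwards the i-th
  trajectory is a rollout of the robot policy trained (via the selection rule sel)
  on the dataset of the previous i trajectories.\<close>
definition rc_kernel :: "nat pmf \<Rightarrow> (nat \<Rightarrow> nat \<Rightarrow> nat pmf) \<Rightarrow> nat \<Rightarrow> (real \<Rightarrow> nat \<Rightarrow> nat)
    \<Rightarrow> (nat \<Rightarrow> nat) \<Rightarrow> ((nat \<times> nat) list \<Rightarrow> real) \<Rightarrow> nat \<Rightarrow> nat \<Rightarrow> (nat \<Rightarrow> traj) \<Rightarrow> traj measure" where
  "rc_kernel p0 P T polc pistar sel m i \<omega> =
     measure_pmf (traj_pmf p0 P (if i < m then pistar else polc (sel (rc_data pistar \<omega> i))) T)"

definition rc_measure :: "nat pmf \<Rightarrow> (nat \<Rightarrow> nat \<Rightarrow> nat pmf) \<Rightarrow> nat \<Rightarrow> (real \<Rightarrow> nat \<Rightarrow> nat)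
    \<Rightarrow> (nat \<Rightarrow> nat) \<Rightarrow> ((nat \<times> nat) list \<Rightarrow> real) \<Rightarrow> nat \<Rightarrow> (nat \<Rightarrow> traj) measure" where
  "rc_measure p0 P T polc pistar sel m =
     projective_family.lim UNIV
       (Ionescu_Tulcea.CI (rc_kernel p0 P T polc pistar sel m) (\<lambda>_. count_space UNIV))
       (\<lambda>_. count_space UNIV)"

end

theory Submission
  imports Defs
begin

text \<open>A deterministic two-step example with two policies. Along its own rollout, \<open>\<theta> = 0\<close>
  has loss 1 and \<open>\<theta> = 1\<close> has loss 2, so \<open>\<theta>* = 0\<close>; \<open>\<theta> = 0\<close> is also strictly better on the
  supervisor's demonstration, so the human-centric estimate is \<open>0\<close> as soon as there is one
  demonstration. On every robot rollout, however, whichever policy produced it, \<open>\<theta> = 1\<close> is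
  better by one unit. After \<open>m\<close> demonstrations the robot-centric dataset therefore favours
  \<open>\<theta> = 1\<close> once it contains more than \<open>2m\<close> trajectories, so the robot-centric procedure
  converges to \<open>1\<close> with probability one, which is at least \<open>e\<^sup>-\<^sup>m\<close>.\<close>

lemma is_argmin_on_exists_finite:
  assumes "finite \<Theta>" "\<Theta> \<noteq> {}"
  shows "\<exists>\<theta>. is_argmin_on \<Theta> f \<theta>"
proof -
  have "Min (f ` \<Theta>) \<in> f ` \<Theta>"
    using assms by simp
  then obtain \<theta> where "\<theta> \<in> \<Theta>" "f \<theta> = Min (f ` \<Theta>)"
    by auto
  then show ?thesis
    using assms by (auto simp: is_argmin_on_def)
qed

lemma is_argmin_on_unique:
  assumes "is_argmin_on \<Theta> f \<theta>" "\<theta>' \<in> \<Theta>" "\<And>\<theta>''. \<theta>'' \<in> \<Theta> \<Longrightarrow> \<theta>'' \<noteq> \<theta>' \<Longrightarrow> f \<theta>' < f \<theta>''"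
  shows "\<theta> = \<theta>'"
  using assms by (force simp: is_argmin_on_def)

lemma (in Ionescu_Tulcea) prob_space_lim: "prob_space PF.lim"
proof (rule prob_spaceI)
  interpret CI0: prob_space "CI {}" by (rule PF.prob_space_P) simp_all
  have "emeasure PF.lim (space PF.lim)
      = emeasure (distr PF.lim (PiM {} M) (\<lambda>x. restrict x {})) (space (PiM {} M))"
    using sets.top[of "PiM {} M"]
    by (subst emeasure_distr)
       (auto simp: space_PiM measurable_cong_sets[OF PF.sets_lim] intro!: arg_cong[where f="emeasure PF.lim"])
  also have "\<dots> = 1"
    using CI0.emeasure_space_1 PF.space_P[of "{}"] by (simp add: distr_lim)
  finally show "emeasure PF.lim (space PF.lim) = 1" .
qed

lemma (in Ionescu_Tulcea) AE_lim_component: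
  assumes A: "A \<in> sets (M n)"
    and kernel_AE: "\<And>x. x \<in> space (PiM {0..<n} M) \<Longrightarrow> AE y in P n x. y \<in> A"
  shows "AE \<omega> in PF.lim. \<omega> n \<in> A"
proof (rule AE_I')
  define X where "X = PiE {n} (\<lambda>_. space (M n) - A)"
  define u :: "nat \<Rightarrow> 'a" where "u = (\<lambda>_. undefined)"
  have X: "X \<in> sets (PiM {n} M)"
    unfolding X_def using A by (intro sets_PiM_I_finite) auto
  have emb_X: "PF.emb {0..<Suc n} {n} X \<in> sets (PiM {0..<Suc n} M)"
    using X by (intro measurable_prod_emb) auto
  have u: "u \<in> space (PiM {0..<0} M)"
    by (simp add: u_def space_PiM)
  have "emeasure PF.lim (PF.emb UNIV {n} X)
      = emeasure (C 0 n u \<bind> eP n) (PF.emb {0..<Suc n} {n} X)"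
    using X by (simp add: lim emeasure_CI[of "{n}" "Suc n"] u_def)
  also have "\<dots> = \<integral>\<^sup>+y. emeasure (eP n y) (PF.emb {0..<Suc n} {n} X) \<partial>C 0 n u"
  proof (rule emeasure_bind[OF _ _ emb_X])
    show "space (C 0 n u) \<noteq> {}"
      using prob_space.not_empty[OF prob_space_C[OF u]] .
    show "eP n \<in> C 0 n u \<rightarrow>\<^sub>M subprob_algebra (PiM {0..<Suc n} M)"
      using measurable_eP[of n] by (simp add: measurable_cong_sets[OF sets_C[OF u] refl])
  qed
  also have "\<dots> = \<integral>\<^sup>+y. 0 \<partial>C 0 n u"
  proof (rule nn_integral_cong)
    fix y assume "y \<in> space (C 0 n u)"
    then have y: "y \<in> space (PiM {0..<n} M)"
      using space_C[OF u] by simp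
    have "(\<lambda>x. y(n := x)) -` PF.emb {0..<Suc n} {n} X \<inter> space (M n) = space (M n) - A"
      using y by (auto simp: X_def prod_emb_def space_PiM PiE_iff extensional_def)
    moreover have "emeasure (P n y) (space (M n) - A) = 0"
      using kernel_AE[OF y] A
      by (subst (asm) AE_iff_measurable[OF _ refl]) (auto simp: space_P[OF y] sets_P[OF y] set_diff_eq)
    ultimately show "emeasure (eP n y) (PF.emb {0..<Suc n} {n} X) = 0"
      using emeasure_eP[OF y emb_X] by simp
  qed
  finally show "PF.emb UNIV {n} X \<in> null_sets PF.lim"
    using X by (simp add: null_sets_def)
  show "{\<omega> \<in> space PF.lim. \<omega> n \<notin> A} \<subseteq> PF.emb UNIV {n} X"
    by (auto simp: X_def prod_emb_def space_PiM PiE_iff)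
qed

lemma measurable_prefix:
  assumes "{0..<n} \<subseteq> I"
  shows "(\<lambda>\<omega>. map \<omega> [0..<n]) \<in> PiM I (\<lambda>_. count_space (UNIV :: 'a :: countable set)) \<rightarrow>\<^sub>M count_space UNIV"
  using assms
proof (induction n)
  case (Suc n)
  let ?PiM = "PiM I (\<lambda>_. count_space (UNIV :: 'a set))"
  have "{0..<n} \<subseteq> I" "n \<in> I"
    using Suc.prems by auto
  then have "(\<lambda>\<omega>. (map \<omega> [0..<n], \<omega> n)) \<in> ?PiM \<rightarrow>\<^sub>M count_space UNIV \<Otimes>\<^sub>M count_space UNIV"
    by (intro measurable_Pair Suc.IH measurable_component_singleton)
  then have "(\<lambda>p. fst p @ [snd p]) \<circ> (\<lambda>\<omega>. (map \<omega> [0..<n], \<omega> n)) \<in> ?PiM \<rightarrow>\<^sub>M count_space UNIV"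
    by (intro measurable_comp[where N="count_space UNIV"]) (simp_all add: pair_measure_countable)
  then show ?case
    by (simp add: comp_def)
qed simp

lemma rc_data_Suc: "rc_data pistar \<omega> (Suc n) = rc_data pistar \<omega> n @ label pistar (\<omega> n)"
  by (simp add: rc_data_def)

lemma measurable_rc_data:
  assumes "{0..<n} \<subseteq> I" "\<And>D. f D \<in> space N"
  shows "(\<lambda>\<omega>. f (rc_data pistar \<omega> n)) \<in> PiM I (\<lambda>_. count_space UNIV) \<rightarrow>\<^sub>M N"
proof -
  have "(\<lambda>xs. f (concat (map (label pistar) xs))) \<in> count_space UNIV \<rightarrow>\<^sub>M N"
    using assms(2) by (simp add: measurable_count_space_eq1)
  from measurable_comp[OF measurable_prefix[OF assms(1)] this] show ?thesis
    by (simp add: comp_def rc_data_def)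
qed

lemma Ionescu_Tulcea_rc_kernel:
  "Ionescu_Tulcea (rc_kernel p0 P T polc pistar sel m) (\<lambda>_. count_space UNIV)"
proof (rule Ionescu_Tulcea.intro)
  fix i
  show "rc_kernel p0 P T polc pistar sel m i
      \<in> PiM {0..<i} (\<lambda>_. count_space UNIV) \<rightarrow>\<^sub>M subprob_algebra (count_space UNIV)"
    unfolding rc_kernel_def by (rule measurable_rc_data) (auto simp: measure_subprob)
qed (simp add: rc_kernel_def prob_space_measure_pmf)

lemma
  shows prob_space_rc_measure: "prob_space (rc_measure p0 P T polc pistar sel m)"
    and sets_rc_measure: "sets (rc_measure p0 P T polc pistar sel m) = sets (PiM UNIV (\<lambda>_. count_space UNIV))"
proof -
  interpret Ionescu_Tulcea "rc_kernel p0 P T polc pistar sel m" "\<lambda>_. count_space UNIV"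
    by (rule Ionescu_Tulcea_rc_kernel)
  show "prob_space (rc_measure p0 P T polc pistar sel m)"
    unfolding rc_measure_def by (rule prob_space_lim)
  show "sets (rc_measure p0 P T polc pistar sel m) = sets (PiM UNIV (\<lambda>_. count_space UNIV))"
    unfolding rc_measure_def by simp
qed

lemma AE_rc_measure_supports:
  assumes "set_pmf (traj_pmf p0 P pistar T) \<subseteq> A"
    and "\<And>\<theta>. set_pmf (traj_pmf p0 P (polc \<theta>) T) \<subseteq> B"
  shows "AE \<omega> in rc_measure p0 P T polc pistar sel m. (\<forall>i<m. \<omega> i \<in> A) \<and> (\<forall>i\<ge>m. \<omega> i \<in> B)"
proof -
  interpret Ionescu_Tulcea "rc_kernel p0 P T polc pistar sel m" "\<lambda>_. count_space UNIV"
    by (rule Ionescu_Tulcea_rc_kernel)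
  have "AE \<omega> in PF.lim. \<omega> i \<in> (if i < m then A else B)" for i
  proof (rule AE_lim_component)
    fix x
    show "AE y in rc_kernel p0 P T polc pistar sel m i x. y \<in> (if i < m then A else B)"
      unfolding rc_kernel_def AE_measure_pmf_iff using assms by auto
  qed simp
  then have "AE \<omega> in PF.lim. \<forall>i. \<omega> i \<in> (if i < m then A else B)"
    by (simp add: AE_all_countable)
  then show ?thesis
    unfolding rc_measure_def by eventually_elim (metis not_le)
qed

lemma rc_obj_rc_data:
  "rc_obj l polc (rc_data pistar \<omega> n) \<theta> = (\<Sum>i<n. Jloss l polc pistar \<theta> (\<omega> i))"
proof -
  have "rc_obj l polc (label pistar \<tau>) \<theta> = Jloss l polc pistar \<theta> \<tau>" for \<tau>
    by (induction \<tau>) (auto simp: rc_obj_def label_def Jloss_def)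
  then show ?thesis
    by (induction n) (simp_all add: rc_data_Suc rc_obj_def, simp add: rc_data_def)
qed

lemma hc_obj_replicate: "hc_obj l polc pistar (replicate N \<tau>) \<theta> = real N * Jloss l polc pistar \<theta> \<tau>"
  by (induction N) (simp_all add: hc_obj_def algebra_simps)

text \<open>Control 0 leads to state 2, control 1 to state 3 and every other
  control to state 1; policy \<open>\<theta>\<close> plays \<open>2x + [\<theta> \<noteq> 0]\<close> in state \<open>x\<close>, so its only
  trajectory visits \<open>0, 2\<close> or \<open>0, 3\<close>, while the supervisor's visits \<open>0, 1\<close>. The loss
  charges the learner's control only; its values are chosen so that the trajectory losses
  are those of \<open>ex_J_values\<close>.\<close>

definition ex_init :: "nat pmf" where
  "ex_init = return_pmf 0"

definition ex_dyn :: "nat \<Rightarrow> nat \<Rightarrow> nat pmf" where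
  "ex_dyn x u = return_pmf (if u = 0 then 2 else if u = 1 then 3 else 1)"

definition ex_supervisor :: "nat \<Rightarrow> nat" where
  "ex_supervisor x = 100"

definition ex_policy :: "real \<Rightarrow> nat \<Rightarrow> nat" where
  "ex_policy \<theta> x = 2 * x + (if \<theta> = 0 then 0 else 1)"

definition ex_loss :: "nat \<Rightarrow> nat \<Rightarrow> real" where
  "ex_loss u v = (if u = 3 \<or> u = 4 then 1 else if u = 6 then 3 else if u = 7 then 2 else 0)"

definition sup_traj :: traj where
  "sup_traj = [(0, 100), (1, 100)]"

definition robot_traj :: "real \<Rightarrow> traj" where
  "robot_traj \<theta> = (if \<theta> = 0 then [(0, 0), (2, 4)] else [(0, 1), (3, 7)])"

abbreviation ex_J :: "real \<Rightarrow> traj \<Rightarrow> real" where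
  "ex_J \<equiv> Jloss ex_loss ex_policy ex_supervisor"

lemma traj_pmf_ex_supervisor: "traj_pmf ex_init ex_dyn ex_supervisor (Suc 0) = return_pmf sup_traj"
  by (simp add: traj_pmf_def ex_init_def ex_dyn_def ex_supervisor_def sup_traj_def bind_return_pmf map_return_pmf)

lemma traj_pmf_ex_policy: "traj_pmf ex_init ex_dyn (ex_policy \<theta>) (Suc 0) = return_pmf (robot_traj \<theta>)"
  by (cases "\<theta> = 0")
     (simp_all add: traj_pmf_def ex_init_def ex_dyn_def ex_policy_def robot_traj_def bind_return_pmf map_return_pmf)

lemma ex_J_values:
  "ex_J 0 sup_traj = 0" "ex_J 1 sup_traj = 1"
  "ex_J 0 (robot_traj 0) = 1" "ex_J 1 (robot_traj 0) = 0"
  "ex_J 0 (robot_traj 1) = 3" "ex_J 1 (robot_traj 1) = 2"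
  by (simp_all add: Jloss_def ex_loss_def ex_policy_def sup_traj_def robot_traj_def)

lemma ex_J_robot_traj: "ex_J 1 (robot_traj \<theta>) = ex_J 0 (robot_traj \<theta>) - 1"
  using ex_J_values by (cases "\<theta> = 0") (simp_all add: robot_traj_def)

lemma ex_exp_loss:
  "\<theta> \<in> {0, 1} \<Longrightarrow> exp_loss ex_init ex_dyn (Suc 0) ex_loss ex_policy ex_supervisor \<theta>
     = ennreal (if \<theta> = 0 then 1 else 2)"
  by (auto simp: exp_loss_def traj_pmf_ex_policy ex_J_values)

lemma ex_hc_converges:
  assumes selh: "\<And>\<tau>s. is_argmin_on {0, 1} (hc_obj ex_loss ex_policy ex_supervisor \<tau>s) (selh \<tau>s)"
  shows "AE \<omega> in stream_space (measure_pmf (traj_pmf ex_init ex_dyn ex_supervisor (Suc 0))).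
           (\<lambda>N. selh (stake N \<omega>)) \<longlonglongrightarrow> 0"
proof -
  have "AE \<omega> in stream_space (measure_pmf (return_pmf sup_traj)). stream_all (\<lambda>\<tau>. \<tau> = sup_traj) \<omega>"
    by (rule prob_space.AE_stream_all[OF prob_space_measure_pmf]) (simp_all add: AE_measure_pmf_iff)
  then show ?thesis
    unfolding traj_pmf_ex_supervisor
  proof eventually_elim
    fix \<omega> assume "stream_all (\<lambda>\<tau>. \<tau> = sup_traj) \<omega>"
    then have stake: "stake N \<omega> = replicate N sup_traj" for N
      by (simp add: stream_all_def list_eq_iff_nth_eq)
    have "selh (stake N \<omega>) = 0" if "N \<ge> 1" for N
      using that by (intro is_argmin_on_unique[OF selh]) (auto simp: stake hc_obj_replicate ex_J_values)
    then show "(\<lambda>N. selh (stake N \<omega>)) \<longlonglongrightarrow> 0"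
      by (intro tendsto_eventually) (auto simp: eventually_sequentially)
  qed
qed

lemma ex_rc_preference:
  assumes "\<forall>i<m. \<omega> i = sup_traj" "\<forall>i\<ge>m. \<omega> i \<in> range robot_traj"
  shows "rc_obj ex_loss ex_policy (rc_data ex_supervisor \<omega> n) 1
           - rc_obj ex_loss ex_policy (rc_data ex_supervisor \<omega> n) 0 = real (min n m) - real (n - m)"
proof -
  have "ex_J 1 (\<omega> i) - ex_J 0 (\<omega> i) = (if i < m then 1 else -1)" for i
  proof (cases "i < m")
    case False
    then obtain \<theta> where "\<omega> i = robot_traj \<theta>"
      using assms(2) not_less by blast
    then show ?thesis
      using False ex_J_robot_traj[of \<theta>] by simp
  qed (simp add: assms(1) ex_J_values)
  then show ?thesis
    unfolding rc_obj_rc_data sum_subtractf[symmetric]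
    by (induction n) (auto simp: min_def)
qed

lemma ex_rc_selects_1:
  assumes sel: "\<And>D. is_argmin_on {0, 1} (rc_obj ex_loss ex_policy D) (sel D)"
    and "\<forall>i<m. \<omega> i = sup_traj" "\<forall>i\<ge>m. \<omega> i \<in> range robot_traj" "2 * m < n"
  shows "sel (rc_data ex_supervisor \<omega> n) = 1"
  using ex_rc_preference[OF assms(2,3), of n] assms(4) by (intro is_argmin_on_unique[OF sel]) auto

lemma ex_rc_fails:
  assumes sel: "\<And>D. is_argmin_on {0, 1} (rc_obj ex_loss ex_policy D) (sel D)"
  shows "measure (rc_measure ex_init ex_dyn (Suc 0) ex_policy ex_supervisor sel m)
           {\<omega>. \<not> (\<lambda>N. sel (rc_data ex_supervisor \<omega> (m + N))) \<longlonglongrightarrow> 0} = 1"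
proof -
  let ?L = "rc_measure ex_init ex_dyn (Suc 0) ex_policy ex_supervisor sel m"
  let ?E = "{\<omega>. \<not> (\<lambda>N. sel (rc_data ex_supervisor \<omega> (m + N))) \<longlonglongrightarrow> 0}"
  interpret prob_space ?L
    by (rule prob_space_rc_measure)
  have "Measurable.pred (PiM UNIV (\<lambda>_. count_space UNIV))
          (\<lambda>\<omega>. \<not> (\<lambda>N. sel (rc_data ex_supervisor \<omega> (m + N))) \<longlonglongrightarrow> 0)"
    by (intro pred_intros_logic measurable_limit measurable_rc_data) auto
  then have "?E \<in> events"
    using sets_eq_imp_space_eq[OF sets_rc_measure] by (simp add: sets_rc_measure pred_def space_PiM)
  moreover have "AE \<omega> in ?L. (\<forall>i<m. \<omega> i \<in> {sup_traj}) \<and> (\<forall>i\<ge>m. \<omega> i \<in> range robot_traj)"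
    by (rule AE_rc_measure_supports) (auto simp: traj_pmf_ex_supervisor traj_pmf_ex_policy)
  then have "AE \<omega> in ?L. \<omega> \<in> ?E"
  proof eventually_elim
    case (elim \<omega>)
    then have "\<forall>\<^sub>F N in sequentially. sel (rc_data ex_supervisor \<omega> (m + N)) = 1"
      unfolding eventually_sequentially using ex_rc_selects_1[OF sel] by (intro exI[of _ "Suc m"]) auto
    then have "(\<lambda>N. sel (rc_data ex_supervisor \<omega> (m + N))) \<longlonglongrightarrow> 1"
      by (rule tendsto_eventually)
    then show ?case
      using LIMSEQ_unique by fastforce
  qed
  ultimately show ?thesis
    by (simp add: prob_eq_1)
qed

theorem theorem1:
  "\<exists>(p0 :: nat pmf) (P :: nat \<Rightarrow> nat \<Rightarrow> nat pmf) (T :: nat) (l :: nat \<Rightarrow> nat \<Rightarrow> real)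
      (pistar :: nat \<Rightarrow> nat) (polc :: real \<Rightarrow> nat \<Rightarrow> nat) (\<Theta> :: real set) (\<theta>star :: real) (c :: real).
     (\<forall>u v. 0 \<le> l u v) \<and>
     \<comment> \<open>the estimators are well defined: all empirical minimizations have a minimizer\<close>
     (\<forall>\<tau>s. \<exists>\<theta>. is_argmin_on \<Theta> (hc_obj l polc pistar \<tau>s) \<theta>) \<and>
     (\<forall>D. \<exists>\<theta>. is_argmin_on \<Theta> (rc_obj l polc D) \<theta>) \<and>
     \<comment> \<open>(i) unique minimizer of the expected trajectory loss\<close>
     \<theta>star \<in> \<Theta> \<and>
     (\<forall>\<theta>\<in>\<Theta>. \<theta> \<noteq> \<theta>star \<longrightarrow>
        exp_loss p0 P T l polc pistar \<theta>star < exp_loss p0 P T l polc pistar \<theta>) \<and>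
     \<comment> \<open>(ii) human-centric learning converges to theta* almost surely, for any choice of minimizers\<close>
     (\<forall>selh :: traj list \<Rightarrow> real.
        (\<forall>\<tau>s. is_argmin_on \<Theta> (hc_obj l polc pistar \<tau>s) (selh \<tau>s)) \<longrightarrow>
        (AE \<omega> in stream_space (measure_pmf (traj_pmf p0 P pistar T)).
           (\<lambda>N. selh (stake N \<omega>)) \<longlonglongrightarrow> \<theta>star)) \<and>
     \<comment> \<open>(iii) robot-centric learning fails to converge to theta* with probability >= c e^-m\<close>
     0 < c \<and>
     (\<forall>sel :: (nat \<times> nat) list \<Rightarrow> real.
        (\<forall>D. is_argmin_on \<Theta> (rc_obj l polc D) (sel D)) \<longrightarrow>
        (\<forall>m::nat. 1 \<le> m \<longrightarrow>
           c * exp (- real m) \<le>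
             measure (rc_measure p0 P T polc pistar sel m)
               {\<omega>. \<not> ((\<lambda>N. sel (rc_data pistar \<omega> (m + N))) \<longlonglongrightarrow> \<theta>star)}))"
proof -
  have argmin_exists: "\<exists>\<theta>. is_argmin_on {0, 1} f \<theta>" for f :: "real \<Rightarrow> real"
    by (rule is_argmin_on_exists_finite) auto
  have hc: "\<forall>selh. (\<forall>\<tau>s. is_argmin_on {0, 1} (hc_obj ex_loss ex_policy ex_supervisor \<tau>s) (selh \<tau>s)) \<longrightarrow>
      (AE \<omega> in stream_space (measure_pmf (traj_pmf ex_init ex_dyn ex_supervisor (Suc 0))).
         (\<lambda>N. selh (stake N \<omega>)) \<longlonglongrightarrow> 0)"
    using ex_hc_converges by blast
  have rc: "\<forall>sel. (\<forall>D. is_argmin_on {0, 1} (rc_obj ex_loss ex_policy D) (sel D)) \<longrightarrow>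
      (\<forall>m::nat. 1 \<le> m \<longrightarrow> 1 * exp (- real m) \<le>
         measure (rc_measure ex_init ex_dyn (Suc 0) ex_policy ex_supervisor sel m)
         {\<omega>. \<not> (\<lambda>N. sel (rc_data ex_supervisor \<omega> (m + N))) \<longlonglongrightarrow> 0})"
    using ex_rc_fails by simp
  show ?thesis
    by (rule exI[of _ ex_init], rule exI[of _ ex_dyn], rule exI[of _ "Suc 0"], rule exI[of _ ex_loss],
        rule exI[of _ ex_supervisor], rule exI[of _ ex_policy], rule exI[of _ "{0, 1}"],
        rule exI[of _ 0], rule exI[of _ 1])
       (use argmin_exists hc rc in \<open>simp add: ex_exp_loss ex_loss_def\<close>)
qed

end
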